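(* Assume $\mathrm{char}(\mathbb{F})=p>0$, let $0\neq h\in\mathbb{F}[x]$, and regard $A_h\subseteq A_1$ via $x\mapsto x$, $\hat y\mapsto yh$. Then $A_h$ is a free module over its center $Z(A_h)=\mathbb{F}[x^p,h^py^p]$, with basis $\{x^ih^jy^j: 0\le i,j<p\}$.
   Context: For $h\in\mathbb{F}[x]$, $A_h$ is the unital associative $\mathbb{F}$-algebra generated by $x,\hat y$ with defining relation $\hat yx-x\hat y=h$. $A_1$ is the Weyl algebra, generated by $x,y$ with $yx-xy=1$; for $h\ne0$, $x\mapsto x,\ \hat y\mapsto yh$ embeds $A_h$ into $A_1$, and for each $j\ge0$ the element $h^jy^j\in A_1$ lies in $A_h$. *)

theory Defs
  imports "HOL-Computational_Algebra.Polynomial"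
begin

text \<open>The Weyl algebra A_1 over a field F (generated by x, y with yx - xy = 1) is
represented by normal forms: an element sum_{i,j} c_{ij} x^j y^i is the polynomial in y
(outer variable) with coefficients in F[x] (inner variable), i.e. the coefficient of y^i
is placed to the LEFT of y^i. Multiplication uses y^i f = sum_k (i choose k) f^(k) y^(i-k).\<close>

definition weyl_mult :: "'a::field poly poly \<Rightarrow> 'a poly poly \<Rightarrow> 'a poly poly" where
  "weyl_mult P Q =
     (\<Sum>i\<le>degree P. \<Sum>j\<le>degree Q. \<Sum>k\<le>i.
        monom (of_nat (i choose k) * coeff P i * (pderiv ^^ k) (coeff Q j)) (i - k + j))"

definition weyl_x :: "'a::field poly poly" where
  "weyl_x = [:[:0, 1:]:]"

definition weyl_y :: "'a::field poly poly" where
  "weyl_y = monom 1 1"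

definition weyl_const :: "'a::field poly \<Rightarrow> 'a poly poly" where
  "weyl_const f = [:f:]"

inductive_set weyl_subalg :: "'a::field poly poly set \<Rightarrow> 'a poly poly set"
  for S :: "'a poly poly set" where
  scalar: "[:[:c:]:] \<in> weyl_subalg S"
| gen: "s \<in> S \<Longrightarrow> s \<in> weyl_subalg S"
| add: "a \<in> weyl_subalg S \<Longrightarrow> b \<in> weyl_subalg S \<Longrightarrow> a + b \<in> weyl_subalg S"
| mult: "a \<in> weyl_subalg S \<Longrightarrow> b \<in> weyl_subalg S \<Longrightarrow> weyl_mult a b \<in> weyl_subalg S"

definition A_h :: "'a::field poly \<Rightarrow> 'a poly poly set" where
  "A_h h = weyl_subalg {weyl_x, weyl_mult weyl_y (weyl_const h)}"

definition weyl_center :: "'a::field poly poly set \<Rightarrow> 'a poly poly set" where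
  "weyl_center B = {z \<in> B. \<forall>b\<in>B. weyl_mult z b = weyl_mult b z}"

definition weyl_pow :: "'a::field poly poly \<Rightarrow> nat \<Rightarrow> 'a poly poly" where
  "weyl_pow a n = (weyl_mult a ^^ n) 1"

end

theory Submission
  imports Defs "HOL-Computational_Algebra.Euclidean_Algorithm"
begin

text \<open>In the normal form \<Sum>j c_j(x) y^j of A_1, the subalgebra A_h consists exactly of the
  elements with h^j dividing c_j: the elements h^j y^j lie in A_h, and the Leibniz rule
  y^i f = \<Sum>k (i choose k) f^(k) y^(i-k) preserves this divisibility. In characteristic p the
  elements x^p and y^p are central in A_1. An element z of the centre of A_h commutes with x,
  which forces its y-degrees to be multiples of p, and then with yhat = y h, which forces the
  x-derivatives of its coefficients to vanish; hence the centre consists of the h-divisible forms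
  in F[x^p][y^p], and these are generated by x^p and h^p y^p. Finally, writing j = p q + r and
  splitting each coefficient as \<Sum>i<p. x^i u_i(x^p) exhibits x^i h^r y^r (i, r < p) as a basis
  over the centre.\<close>

lemma sum_eq_single:
  assumes "finite A" "a \<in> A" "\<And>k. k \<in> A \<Longrightarrow> k \<noteq> a \<Longrightarrow> g k = 0"
  shows "sum g A = g a"
  using assms by (subst sum.remove[OF assms(1,2)]) (simp add: sum.neutral)

lemma pderiv_sum: "pderiv (\<Sum>x\<in>A. f x) = (\<Sum>x\<in>A. pderiv (f x))"
  by (induction A rule: infinite_finite_induct) (simp_all add: pderiv_add)

lemma smult_sum_right: "smult c (\<Sum>x\<in>A. f x) = (\<Sum>x\<in>A. smult c (f x))"
  by (induction A rule: infinite_finite_induct) (simp_all add: smult_add_right)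

lemma poly_mult_as_sum_of_monoms:
  "P * Q = (\<Sum>i\<le>degree P. \<Sum>j\<le>degree Q. monom (coeff P i * coeff Q j) (i + j))"
proof -
  have "P * Q = (\<Sum>i\<le>degree P. monom (coeff P i) i) * (\<Sum>j\<le>degree Q. monom (coeff Q j) j)"
    by (simp add: poly_as_sum_of_monoms)
  then show ?thesis
    by (simp add: sum_product mult_monom)
qed

section \<open>Weyl multiplication\<close>

lemma weyl_mult_eq_bounded_sum:
  assumes "degree P \<le> N" "degree Q \<le> M"
  shows "weyl_mult P Q = (\<Sum>i\<le>N. \<Sum>j\<le>M. \<Sum>k\<le>i.
           monom (of_nat (i choose k) * coeff P i * (pderiv ^^ k) (coeff Q j)) (i - k + j))"
proof -
  let ?F = "\<lambda>i j. \<Sum>k\<le>i. monom (of_nat (i choose k) * coeff P i * (pderiv ^^ k) (coeff Q j)) (i - k + j)"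
  have "(\<Sum>j\<le>M. ?F i j) = (\<Sum>j\<le>degree Q. ?F i j)" for i
    by (rule sum.mono_neutral_right) (use assms in \<open>auto simp: coeff_eq_0\<close>)
  moreover have "(\<Sum>i\<le>N. \<Sum>j\<le>degree Q. ?F i j) = (\<Sum>i\<le>degree P. \<Sum>j\<le>degree Q. ?F i j)"
    by (rule sum.mono_neutral_right) (use assms in \<open>auto simp: coeff_eq_0\<close>)
  ultimately show ?thesis
    unfolding weyl_mult_def by simp
qed

lemma weyl_mult_add_left: "weyl_mult (P1 + P2) Q = weyl_mult P1 Q + weyl_mult P2 Q"
  by (simp add: weyl_mult_eq_bounded_sum[where N = "max (degree P1) (degree P2)" and M = "degree Q"]
      degree_add_le_max ring_distribs add_monom[symmetric] sum.distrib)

lemma weyl_mult_add_right: "weyl_mult P (Q1 + Q2) = weyl_mult P Q1 + weyl_mult P Q2"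
  by (simp add: weyl_mult_eq_bounded_sum[where N = "degree P" and M = "max (degree Q1) (degree Q2)"]
      degree_add_le_max ring_distribs add_monom[symmetric] sum.distrib higher_pderiv_add)

lemma weyl_mult_0_left [simp]: "weyl_mult 0 Q = 0"
  by (simp add: weyl_mult_def)

lemma weyl_mult_0_right [simp]: "weyl_mult P 0 = 0"
  by (simp add: weyl_mult_def)

lemma weyl_mult_sum_left: "weyl_mult (\<Sum>x\<in>A. f x) Q = (\<Sum>x\<in>A. weyl_mult (f x) Q)"
  by (induction A rule: infinite_finite_induct) (simp_all add: weyl_mult_add_left)

lemma weyl_mult_sum_right: "weyl_mult P (\<Sum>x\<in>A. f x) = (\<Sum>x\<in>A. weyl_mult P (f x))"
  by (induction A rule: infinite_finite_induct) (simp_all add: weyl_mult_add_right)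

lemma weyl_mult_monom:
  "weyl_mult (monom f i) (monom g j) =
     (\<Sum>k\<le>i. monom (of_nat (i choose k) * f * (pderiv ^^ k) g) (i - k + j))"
  by (subst weyl_mult_eq_bounded_sum[where N = i and M = j])
     (simp_all add: degree_monom_le coeff_monom sum_eq_single[where a = i] sum_eq_single[where a = j])

lemma weyl_mult_const_left: "weyl_mult [:f:] Q = smult f Q"
proof -
  have "weyl_mult [:f:] Q = (\<Sum>j\<le>degree Q. monom (f * coeff Q j) j)"
    by (simp add: weyl_mult_eq_bounded_sum[where N = 0 and M = "degree Q"])
  also have "\<dots> = smult f Q"
    by (simp add: smult_monom[symmetric] poly_as_sum_of_monoms flip: smult_sum_right)
  finally show ?thesis .
qed

lemma weyl_mult_eq_times_if:
  assumes "\<And>i j k. 1 \<le> k \<Longrightarrow> k \<le> i \<Longrightarrow>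
             of_nat (i choose k) * coeff P i * (pderiv ^^ k) (coeff Q j) = 0"
  shows "weyl_mult P Q = P * Q"
  unfolding weyl_mult_def poly_mult_as_sum_of_monoms[of P Q]
  by (intro sum.cong refl) (subst sum_eq_single[where a = 0], auto simp: assms)

section \<open>Characteristic p\<close>

lemma dvd_add_complement_mod:
  fixes m p :: nat
  assumes "p > 0"
  shows "p dvd m + (p - m mod p) mod p"
proof (cases "m mod p = 0")
  case False
  have "m mod p < p"
    using assms by simp
  have "m + (p - m mod p) mod p = m + (p - m mod p)"
    using False assms by (intro arg_cong2[where f = "(+)"] mod_less diff_less) auto
  also have "\<dots> = p * (m div p) + m mod p + (p - m mod p)"
    by simp
  also have "\<dots> = p * (m div p) + p"
    using \<open>m mod p < p\<close> by linarith
  finally show ?thesis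
    by simp
qed (simp add: dvd_eq_mod_eq_0)

lemma higher_pderiv_eq_0_if_CHAR_le:
  fixes g :: "'a::field poly"
  assumes "CHAR('a) = p" "p > 0" "p \<le> k"
  shows "(pderiv ^^ k) g = 0"
proof (rule poly_eqI)
  fix n
  define i where "i = (p - Suc n mod p) mod p"
  have "i < k"
    using assms unfolding i_def by (meson less_le_trans mod_less_divisor)
  have "p dvd Suc n + i"
    unfolding i_def using \<open>p > 0\<close> by (rule dvd_add_complement_mod)
  also have "Suc n + i dvd (\<Prod>i'=0..<k. Suc n + i')"
    using \<open>i < k\<close> by (intro dvd_prodI) auto
  also have "(\<Prod>i'=0..<k. Suc n + i') = pochhammer (Suc n) k"
    by (simp add: pochhammer_prod)
  finally have "(of_nat (pochhammer (Suc n) k) :: 'a) = 0"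
    using assms(1) by (simp only: of_nat_eq_0_iff_char_dvd)
  then have "pochhammer (of_nat (Suc n) :: 'a) k = 0"
    by (simp only: pochhammer_of_nat)
  then show "coeff ((pderiv ^^ k) g) n = coeff 0 n"
    by (simp only: coeff_higher_pderiv) simp
qed

lemma coeff_eq_0_if_pderiv_eq_0:
  fixes g :: "'a::idom poly"
  assumes "pderiv g = 0" "\<not> CHAR('a) dvd m"
  shows "coeff g m = 0"
proof (cases m)
  case (Suc n)
  have "of_nat (Suc n) * coeff g (Suc n) = 0"
    using assms(1) by (metis coeff_0 coeff_pderiv)
  moreover have "(of_nat (Suc n) :: 'a) \<noteq> 0"
    using assms(2) Suc by (simp only: of_nat_eq_0_iff_char_dvd) simp
  ultimately show ?thesis
    using Suc by simp
qed (use assms in simp)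

lemma pderiv_power_eq_0_if_CHAR_dvd:
  fixes f :: "'a::idom poly"
  assumes "CHAR('a) dvd n"
  shows "pderiv (f ^ n) = 0"
  using assms by (simp add: pderiv_power of_nat_eq_0_iff_char_dvd)

lemma prime_dvd_choose:
  assumes "prime p" "p dvd n" "\<not> p dvd k" "0 < k"
  shows "p dvd (n choose k)"
proof -
  have "k * (n choose k) = n * ((n - 1) choose (k - 1))"
    using \<open>0 < k\<close> by (rule times_binomial_minus1_eq)
  then have "p dvd k * (n choose k)"
    using \<open>p dvd n\<close> by simp
  then show ?thesis
    using assms(1,3) prime_dvd_mult_iff by blast
qed

text \<open>The next two lemmas express that y^p and x^p are central in A_1.\<close>

lemma weyl_mult_eq_times_if_degrees_dvd:
  fixes P Q :: "'a::field poly poly"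
  assumes "CHAR('a) = p" "p > 0" "\<And>i. \<not> p dvd i \<Longrightarrow> coeff P i = 0"
  shows "weyl_mult P Q = P * Q"
proof (rule weyl_mult_eq_times_if)
  fix i j k :: nat
  assume k: "1 \<le> k" "k \<le> i"
  show "of_nat (i choose k) * coeff P i * (pderiv ^^ k) (coeff Q j) = 0"
  proof (cases "coeff P i = 0")
    case False
    then have "p dvd i"
      using assms(3) by blast
    show ?thesis
    proof (cases "p dvd k")
      case True
      then have "p \<le> k"
        using k by (auto dest: dvd_imp_le)
      then show ?thesis
        using higher_pderiv_eq_0_if_CHAR_le[OF assms(1,2)] by simp
    next
      case False
      then have "p dvd (i choose k)"
        using prime_dvd_choose prime_CHAR_semidom[where 'a = 'a] assms(1,2) \<open>p dvd i\<close> k by simp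
      then show ?thesis
        using assms(1) by (simp add: of_nat_eq_0_iff_char_dvd)
    qed
  qed simp
qed

lemma weyl_mult_eq_times_if_pderiv_coeff_eq_0:
  assumes "\<And>j. pderiv (coeff Q j) = 0"
  shows "weyl_mult P Q = P * Q"
proof (rule weyl_mult_eq_times_if)
  fix i j k :: nat
  assume "1 \<le> k"
  then have "(pderiv ^^ k) (coeff Q j) = 0"
    using assms by (induction k) (auto simp del: funpow.simps simp: funpow_Suc_right)
  then show "of_nat (i choose k) * coeff P i * (pderiv ^^ k) (coeff Q j) = 0"
    by simp
qed

section \<open>The normal forms of A_h\<close>

definition hdvd_forms :: "'a::field poly \<Rightarrow> 'a poly poly set" where
  "hdvd_forms h = {P. \<forall>j. h ^ j dvd coeff P j}"

lemma hdvd_forms_add: "P \<in> hdvd_forms h \<Longrightarrow> Q \<in> hdvd_forms h \<Longrightarrow> P + Q \<in> hdvd_forms h"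
  by (simp add: hdvd_forms_def)

lemma hdvd_forms_sum:
  "(\<And>x. x \<in> A \<Longrightarrow> f x \<in> hdvd_forms h) \<Longrightarrow> (\<Sum>x\<in>A. f x) \<in> hdvd_forms h"
  by (induction A rule: infinite_finite_induct) (simp_all add: hdvd_forms_def)

lemma monom_in_hdvd_forms_iff: "monom g n \<in> hdvd_forms h \<longleftrightarrow> h ^ n dvd g"
  by (auto simp: hdvd_forms_def coeff_monom)

lemma pderiv_dvd_power:
  fixes h u :: "'a::field poly"
  assumes "h ^ m dvd u"
  shows "h ^ (m - 1) dvd pderiv u"
proof (cases m)
  case (Suc m')
  obtain v where u: "u = h ^ Suc m' * v"
    using assms Suc by (auto elim: dvdE)
  have "pderiv u = h ^ Suc m' * pderiv v + v * (smult (of_nat (Suc m')) (h ^ m') * pderiv h)"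
    unfolding u by (simp only: pderiv_mult pderiv_power_Suc)
  also have "\<dots> = h ^ m' * (h * pderiv v + v * smult (of_nat (Suc m')) (pderiv h))"
    by (simp add: algebra_simps)
  finally show ?thesis
    using Suc by simp
qed simp

lemma higher_pderiv_dvd_power:
  fixes h u :: "'a::field poly"
  assumes "h ^ m dvd u"
  shows "h ^ (m - k) dvd (pderiv ^^ k) u"
proof (induction k)
  case (Suc k)
  then have "h ^ (m - k - 1) dvd pderiv ((pderiv ^^ k) u)"
    by (rule pderiv_dvd_power)
  then show ?case
    by simp
qed (use assms in simp)

text \<open>Each term of the Leibniz rule loses at most k factors h from the coefficient of y^j
  together with k powers of y.\<close>

lemma weyl_mult_in_hdvd_forms:
  assumes "P \<in> hdvd_forms h" "Q \<in> hdvd_forms h"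
  shows "weyl_mult P Q \<in> hdvd_forms h"
  unfolding weyl_mult_def
proof (intro hdvd_forms_sum)
  fix i j k :: nat
  assume "k \<in> {..i}"
  have "h ^ i * h ^ (j - k) dvd coeff P i * (pderiv ^^ k) (coeff Q j)"
    using assms by (intro mult_dvd_mono higher_pderiv_dvd_power) (simp_all add: hdvd_forms_def)
  moreover have "h ^ (i - k + j) dvd h ^ i * h ^ (j - k)"
    unfolding power_add[symmetric] using \<open>k \<in> {..i}\<close> by (intro le_imp_power_dvd) auto
  ultimately have "h ^ (i - k + j) dvd coeff P i * (pderiv ^^ k) (coeff Q j)"
    using dvd_trans by blast
  then show "monom (of_nat (i choose k) * coeff P i * (pderiv ^^ k) (coeff Q j)) (i - k + j)
               \<in> hdvd_forms h"
    by (simp add: monom_in_hdvd_forms_iff mult.assoc)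
qed

lemma weyl_yhat_eq: "weyl_mult weyl_y (weyl_const h) = monom h 1 + monom (pderiv h) 0"
  unfolding weyl_y_def weyl_const_def monom_0[symmetric] weyl_mult_monom
  by (simp add: atMost_Suc)

lemma A_h_subset_hdvd_forms: "A_h h \<subseteq> hdvd_forms h"
proof
  fix a
  assume "a \<in> A_h h"
  then show "a \<in> hdvd_forms h"
    unfolding A_h_def
  proof (induction rule: weyl_subalg.induct)
    case (scalar c)
    then show ?case
      by (auto simp: hdvd_forms_def coeff_pCons split: nat.splits)
  next
    case (gen s)
    then show ?case
      by (auto simp: weyl_yhat_eq weyl_x_def hdvd_forms_add monom_in_hdvd_forms_iff
          hdvd_forms_def coeff_pCons split: nat.splits)
  qed (simp_all add: hdvd_forms_add weyl_mult_in_hdvd_forms)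
qed

lemma weyl_subalg_0: "0 \<in> weyl_subalg S"
  using weyl_subalg.scalar[of 0 S] by simp

lemma weyl_subalg_1: "1 \<in> weyl_subalg S"
  using weyl_subalg.scalar[of 1 S] by (simp add: one_pCons)

lemma weyl_subalg_sum:
  "(\<And>x. x \<in> A \<Longrightarrow> f x \<in> weyl_subalg S) \<Longrightarrow> (\<Sum>x\<in>A. f x) \<in> weyl_subalg S"
  by (induction A rule: infinite_finite_induct) (simp_all add: weyl_subalg_0 weyl_subalg.add)

lemma weyl_pow_in_weyl_subalg: "a \<in> weyl_subalg S \<Longrightarrow> weyl_pow a n \<in> weyl_subalg S"
  unfolding weyl_pow_def by (induction n) (auto intro: weyl_subalg.mult weyl_subalg_1)

lemma weyl_const_in_weyl_subalg:
  assumes "weyl_x \<in> S"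
  shows "[:f:] \<in> weyl_subalg S"
proof (induction f rule: pCons_induct)
  case (pCons a f)
  have "weyl_mult weyl_x [:f:] \<in> weyl_subalg S"
    using assms pCons.IH by (blast intro: weyl_subalg.mult weyl_subalg.gen)
  moreover have "[:pCons a f:] = [:[:a:]:] + weyl_mult weyl_x [:f:]"
    by (simp add: weyl_x_def weyl_mult_const_left)
  ultimately show ?case
    by (metis weyl_subalg.add weyl_subalg.scalar)
qed (simp add: weyl_subalg_0)

lemma weyl_const_in_A_h: "[:f:] \<in> A_h h"
  unfolding A_h_def by (rule weyl_const_in_weyl_subalg) simp

lemma weyl_yhat_in_A_h: "monom h 1 + monom (pderiv h) 0 \<in> A_h h"
  unfolding A_h_def weyl_yhat_eq[symmetric] by (rule weyl_subalg.gen) simp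

lemma A_h_mult: "a \<in> A_h h \<Longrightarrow> b \<in> A_h h \<Longrightarrow> weyl_mult a b \<in> A_h h"
  unfolding A_h_def by (rule weyl_subalg.mult)

text \<open>h^(j+1) y^(j+1) = yhat (h^j y^j) - (j+1) h' h^j y^j.\<close>

lemma monom_hpow_in_A_h: "monom (h ^ j) j \<in> A_h h"
proof (induction j)
  case 0
  then show ?case
    using weyl_const_in_A_h[of 1 h] by (simp add: monom_0)
next
  case (Suc j)
  let ?yhat = "monom h 1 + monom (pderiv h) 0" and ?M = "monom (h ^ j) j"
  let ?c = "smult (of_nat (Suc j)) (pderiv h)"
  have "weyl_mult ?yhat ?M = monom (h ^ Suc j) (Suc j) + monom (pderiv (h ^ Suc j)) j"
    by (simp add: weyl_mult_add_left weyl_mult_monom atMost_Suc pderiv_mult add_monom algebra_simps)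
  also have "pderiv (h ^ Suc j) = ?c * h ^ j"
    by (simp only: pderiv_power_Suc) (simp add: mult.commute)
  moreover have "weyl_mult [:- ?c:] ?M = - monom (?c * h ^ j) j"
    by (simp add: weyl_mult_const_left smult_monom minus_monom)
  ultimately have "monom (h ^ Suc j) (Suc j) = weyl_mult ?yhat ?M + weyl_mult [:- ?c:] ?M"
    by simp
  moreover have "weyl_mult ?yhat ?M \<in> A_h h" "weyl_mult [:- ?c:] ?M \<in> A_h h"
    by (rule A_h_mult[OF weyl_yhat_in_A_h Suc.IH], rule A_h_mult[OF weyl_const_in_A_h Suc.IH])
  ultimately show ?case
    unfolding A_h_def by (metis weyl_subalg.add)
qed

lemma hdvd_forms_subset_A_h: "hdvd_forms h \<subseteq> A_h h"
proof
  fix P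
  assume P: "P \<in> hdvd_forms h"
  have "monom (coeff P n) n \<in> A_h h" for n
  proof -
    obtain f where f: "coeff P n = h ^ n * f"
      using P by (auto simp: hdvd_forms_def elim: dvdE)
    have "monom (coeff P n) n = weyl_mult [:f:] (monom (h ^ n) n)"
      by (simp add: weyl_mult_const_left smult_monom f mult.commute)
    then show ?thesis
      by (simp add: A_h_mult weyl_const_in_A_h monom_hpow_in_A_h)
  qed
  then have "(\<Sum>n\<le>degree P. monom (coeff P n) n) \<in> A_h h"
    unfolding A_h_def by (rule weyl_subalg_sum[folded A_h_def])
  then show "P \<in> A_h h"
    by (simp add: poly_as_sum_of_monoms)
qed

lemma A_h_eq_hdvd_forms: "A_h h = hdvd_forms h"
  using A_h_subset_hdvd_forms hdvd_forms_subset_A_h by blast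

section \<open>The centre of A_h\<close>

text \<open>In characteristic p these are the normal forms of F[x^p, y^p], the centre of A_1.\<close>

definition p_central_forms :: "nat \<Rightarrow> 'a::field poly poly set" where
  "p_central_forms p = {P. \<forall>j. pderiv (coeff P j) = 0 \<and> (\<not> p dvd j \<longrightarrow> coeff P j = 0)}"

lemma weyl_mult_p_central_forms:
  fixes P Q :: "'a::field poly poly"
  assumes "CHAR('a) = p" "p > 0" "P \<in> p_central_forms p"
  shows "weyl_mult P Q = P * Q" "weyl_mult Q P = P * Q"
proof -
  show "weyl_mult P Q = P * Q"
    using assms by (intro weyl_mult_eq_times_if_degrees_dvd) (auto simp: p_central_forms_def)
  show "weyl_mult Q P = P * Q"
    using assms(3) by (subst mult.commute, intro weyl_mult_eq_times_if_pderiv_coeff_eq_0)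
      (simp add: p_central_forms_def)
qed

lemma higher_pderiv_X:
  "(pderiv ^^ k) [:0, 1::'a::field:] = (if k = 0 then [:0, 1:] else if k = 1 then 1 else 0)"
proof (cases k)
  case (Suc k')
  then show ?thesis
    by (cases k') (simp_all del: funpow.simps add: funpow_Suc_right pderiv_pCons)
qed simp

lemma weyl_mult_monom_x:
  "weyl_mult (monom c i) [:[:0, 1::'a::field:]:] = smult [:0, 1:] (monom c i) + pderiv (monom c i)"
proof (cases i)
  case 0
  then show ?thesis
    by (simp add: monom_0 weyl_mult_const_left pderiv_pCons)
next
  case (Suc i')
  have "weyl_mult (monom c i) [:[:0, 1::'a:]:] =
          (\<Sum>k\<le>i. monom (of_nat (i choose k) * c * (pderiv ^^ k) [:0, 1:]) (i - k))"
    unfolding monom_0[of "[:0, 1:]", symmetric] weyl_mult_monom by simp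
  also have "\<dots> = (\<Sum>k\<in>{0, 1}. monom (of_nat (i choose k) * c * (pderiv ^^ k) [:0, 1:]) (i - k))"
    by (rule sum.mono_neutral_right) (auto simp: higher_pderiv_X Suc)
  also have "\<dots> = smult [:0, 1:] (monom c i) + pderiv (monom c i)"
    by (simp add: higher_pderiv_X pderiv_monom smult_monom Suc mult.commute)
  finally show ?thesis .
qed

lemma weyl_mult_x_right:
  "weyl_mult P [:[:0, 1::'a::field:]:] = smult [:0, 1:] P + pderiv P"
proof -
  have "weyl_mult P [:[:0, 1::'a:]:] =
          (\<Sum>i\<le>degree P. smult [:0, 1:] (monom (coeff P i) i) + pderiv (monom (coeff P i) i))"
    by (subst (1) poly_as_sum_of_monoms[symmetric]) (simp add: weyl_mult_sum_left weyl_mult_monom_x)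
  also have "\<dots> = smult [:0, 1:] (\<Sum>i\<le>degree P. monom (coeff P i) i) +
                   pderiv (\<Sum>i\<le>degree P. monom (coeff P i) i)"
    by (simp add: sum.distrib smult_sum_right pderiv_sum)
  finally show ?thesis
    by (simp add: poly_as_sum_of_monoms)
qed

lemma weyl_mult_yhat_left:
  "weyl_mult (monom h 1 + monom (pderiv h) 0) Q =
     Q * (monom h 1 + monom (pderiv h) 0) + (\<Sum>j\<le>degree Q. monom (h * pderiv (coeff Q j)) j)"
proof -
  have "weyl_mult (monom h 1) Q =
          (\<Sum>j\<le>degree Q. monom (h * coeff Q j) (Suc j) + monom (h * pderiv (coeff Q j)) j)"
    by (subst (1) poly_as_sum_of_monoms[symmetric])
      (simp add: weyl_mult_sum_right weyl_mult_monom atMost_Suc add.commute)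
  also have "\<dots> = Q * monom h 1 + (\<Sum>j\<le>degree Q. monom (h * pderiv (coeff Q j)) j)"
    by (subst (3) poly_as_sum_of_monoms[symmetric])
      (simp add: sum.distrib sum_distrib_right mult_monom mult.commute[of h])
  moreover have "weyl_mult (monom (pderiv h) 0) Q = Q * monom (pderiv h) 0"
    by (simp add: monom_0 weyl_mult_const_left)
  ultimately show ?thesis
    by (simp add: weyl_mult_add_left algebra_simps)
qed

lemma weyl_center_A_h:
  fixes h :: "'a::field poly"
  assumes "CHAR('a) = p" "p > 0" "h \<noteq> 0"
  shows "weyl_center (A_h h) = hdvd_forms h \<inter> p_central_forms p"
proof
  show "weyl_center (A_h h) \<subseteq> hdvd_forms h \<inter> p_central_forms p"
  proof
    fix z
    assume "z \<in> weyl_center (A_h h)"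
    then have "z \<in> hdvd_forms h"
      and comm: "\<And>b. b \<in> hdvd_forms h \<Longrightarrow> weyl_mult z b = weyl_mult b z"
      by (auto simp: weyl_center_def A_h_eq_hdvd_forms)
    have "weyl_mult z [:[:0, 1:]:] = weyl_mult [:[:0, 1:]:] z"
      using comm weyl_const_in_A_h[of "[:0, 1:]" h] by (simp add: A_h_eq_hdvd_forms)
    then have "pderiv z = 0"
      by (simp add: weyl_mult_x_right weyl_mult_const_left)
    then have degrees: "coeff z j = 0" if "\<not> p dvd j" for j
      using that assms(1) by (simp add: coeff_eq_0_if_pderiv_eq_0)
    let ?yhat = "monom h 1 + monom (pderiv h) 0"
    have "weyl_mult z ?yhat = weyl_mult ?yhat z"
      using comm weyl_yhat_in_A_h[of h] by (simp add: A_h_eq_hdvd_forms)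
    moreover have "weyl_mult z ?yhat = z * ?yhat"
      using assms(1,2) degrees by (rule weyl_mult_eq_times_if_degrees_dvd)
    ultimately have "(\<Sum>j\<le>degree z. monom (h * pderiv (coeff z j)) j) = 0"
      using weyl_mult_yhat_left[of h z] by simp
    then have derivs: "pderiv (coeff z j) = 0" for j
    proof (cases "j \<le> degree z")
      case True
      have "coeff (\<Sum>i\<le>degree z. monom (h * pderiv (coeff z i)) i) j = h * pderiv (coeff z j)"
        using True by (simp add: coeff_sum coeff_monom)
      then show ?thesis
        using \<open>(\<Sum>j\<le>degree z. monom (h * pderiv (coeff z j)) j) = 0\<close> assms(3) by simp
    qed (simp add: coeff_eq_0)
    show "z \<in> hdvd_forms h \<inter> p_central_forms p"
      using \<open>z \<in> hdvd_forms h\<close> degrees derivs by (auto simp: p_central_forms_def)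
  qed
next
  show "hdvd_forms h \<inter> p_central_forms p \<subseteq> weyl_center (A_h h)"
    using weyl_mult_p_central_forms[OF assms(1,2)]
    by (auto simp: weyl_center_def A_h_eq_hdvd_forms)
qed

section \<open>Generators of the centre\<close>

lemma hdvd_forms_times:
  assumes "P \<in> hdvd_forms h" "Q \<in> hdvd_forms h"
  shows "P * Q \<in> hdvd_forms h"
  unfolding hdvd_forms_def mem_Collect_eq coeff_mult
proof (intro allI dvd_sum)
  fix n i :: nat
  assume "i \<in> {..n}"
  then have "h ^ n = h ^ i * h ^ (n - i)"
    by (simp flip: power_add)
  then show "h ^ n dvd coeff P i * coeff Q (n - i)"
    using assms by (simp add: hdvd_forms_def mult_dvd_mono)
qed

lemma p_central_forms_times:
  assumes "P \<in> p_central_forms p" "Q \<in> p_central_forms p"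
  shows "P * Q \<in> p_central_forms p"
proof -
  have "coeff (P * Q) n = 0" if "\<not> p dvd n" for n
    unfolding coeff_mult
  proof (intro sum.neutral ballI)
    fix i
    assume "i \<in> {..n}"
    then have "\<not> p dvd i \<or> \<not> p dvd (n - i)"
      using that by (metis atMost_iff dvd_add le_add_diff_inverse)
    then show "coeff P i * coeff Q (n - i) = 0"
      using assms by (auto simp: p_central_forms_def)
  qed
  moreover have "pderiv (coeff (P * Q) n) = 0" for n
    using assms by (simp add: coeff_mult pderiv_sum pderiv_mult p_central_forms_def)
  ultimately show ?thesis
    by (simp add: p_central_forms_def)
qed

lemma p_central_forms_add:
  "P \<in> p_central_forms p \<Longrightarrow> Q \<in> p_central_forms p \<Longrightarrow> P + Q \<in> p_central_forms p"
  by (simp add: p_central_forms_def pderiv_add)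

lemma weyl_pow_const: "weyl_pow [:f:] n = [:f ^ n:]"
  unfolding weyl_pow_def by (induction n) (simp_all add: weyl_mult_const_left one_pCons)

lemma weyl_pow_y: "weyl_pow (weyl_y :: 'a::field poly poly) n = monom 1 n"
proof (induction n)
  case (Suc n)
  have "weyl_pow (weyl_y :: 'a poly poly) (Suc n) = weyl_mult weyl_y (weyl_pow weyl_y n)"
    by (simp add: weyl_pow_def)
  also have "\<dots> = monom 1 (Suc n)"
    unfolding Suc.IH by (simp add: weyl_y_def weyl_mult_monom atMost_Suc)
  finally show ?case .
qed (simp add: weyl_pow_def monom_0 one_pCons)

definition central_subalg :: "nat \<Rightarrow> 'a::field poly \<Rightarrow> 'a poly poly set" where
  "central_subalg p h = weyl_subalg {[:[:0, 1:] ^ p:], monom (h ^ p) p}"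

lemma central_subalg_eq:
  "weyl_subalg {weyl_pow weyl_x p, weyl_mult (weyl_const (h ^ p)) (weyl_pow weyl_y p)} =
     central_subalg p h"
  by (simp add: central_subalg_def weyl_x_def weyl_pow_const weyl_pow_y weyl_const_def
      weyl_mult_const_left smult_monom)

lemma central_subalg_subset:
  fixes h :: "'a::field poly"
  assumes "CHAR('a) = p" "p > 0"
  shows "central_subalg p h \<subseteq> hdvd_forms h \<inter> p_central_forms p"
proof
  fix a
  assume "a \<in> central_subalg p h"
  then show "a \<in> hdvd_forms h \<inter> p_central_forms p"
    unfolding central_subalg_def
  proof (induction rule: weyl_subalg.induct)
    case (scalar c)
    then show ?case
      by (auto simp: hdvd_forms_def p_central_forms_def coeff_pCons split: nat.splits)
  next
    case (gen s)
    have "pderiv ([:0, 1 :: 'a:] ^ p) = 0"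
      using assms(1) by (simp add: pderiv_power_eq_0_if_CHAR_dvd)
    moreover have "pderiv (h ^ p) = 0"
      using assms(1) by (simp add: pderiv_power_eq_0_if_CHAR_dvd)
    ultimately show ?case
      using gen
      by (auto simp: hdvd_forms_def p_central_forms_def coeff_pCons split: nat.splits intro: gr0I)
  next
    case (add a b)
    then show ?case
      by (simp add: hdvd_forms_add p_central_forms_add)
  next
    case (mult a b)
    then show ?case
      using weyl_mult_p_central_forms(1)[OF assms] hdvd_forms_times p_central_forms_times by auto
  qed
qed

lemma monom_hpow_mult_in_central_subalg:
  fixes h :: "'a::field poly"
  assumes "CHAR('a) = p" "p > 0"
  shows "monom (h ^ (p * q)) (p * q) \<in> central_subalg p h"
proof (induction q)
  case 0
  then show ?case
    using weyl_subalg_1 by (simp add: central_subalg_def monom_0 one_pCons)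
next
  case (Suc q)
  have "monom (h ^ (p * Suc q)) (p * Suc q) = monom (h ^ p) p * monom (h ^ (p * q)) (p * q)"
    by (simp add: mult_monom power_add)
  also have "\<dots> = weyl_mult (monom (h ^ p) p) (monom (h ^ (p * q)) (p * q))"
    using assms by (intro weyl_mult_eq_times_if_degrees_dvd[symmetric]) (auto simp: coeff_monom)
  also have "\<dots> \<in> central_subalg p h"
    unfolding central_subalg_def
    by (rule weyl_subalg.mult[OF weyl_subalg.gen Suc.IH[unfolded central_subalg_def]]) simp
  finally show ?case .
qed

lemma weyl_const_in_central_subalg:
  fixes g :: "'a::field poly"
  assumes "CHAR('a) = p" "pderiv g = 0"
  shows "[:g:] \<in> central_subalg p h"
proof -
  have "[:monom (coeff g m) m:] \<in> central_subalg p h" for m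
  proof (cases "p dvd m")
    case True
    then obtain r where "m = p * r"
      by blast
    then have "[:monom (coeff g m) m:] = weyl_mult [:[:coeff g m:]:] (weyl_pow [:[:0, 1:] ^ p:] r)"
      by (simp add: weyl_mult_const_left weyl_pow_const monom_altdef power_mult)
    also have "\<dots> \<in> central_subalg p h"
      unfolding central_subalg_def
      by (intro weyl_subalg.mult weyl_subalg.scalar weyl_pow_in_weyl_subalg weyl_subalg.gen) simp
    finally show ?thesis .
  next
    case False
    then show ?thesis
      using assms by (simp add: coeff_eq_0_if_pderiv_eq_0 weyl_subalg_0 central_subalg_def)
  qed
  then have "(\<Sum>m\<le>degree g. [:monom (coeff g m) m:]) \<in> central_subalg p h"
    unfolding central_subalg_def by (rule weyl_subalg_sum[folded central_subalg_def])
  then show ?thesis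
    by (simp add: monom_0[symmetric] monom_sum[symmetric] poly_as_sum_of_monoms)
qed

lemma hdvd_p_central_forms_subset_central_subalg:
  fixes h :: "'a::field poly"
  assumes "CHAR('a) = p" "p > 0" "h \<noteq> 0"
  shows "hdvd_forms h \<inter> p_central_forms p \<subseteq> central_subalg p h"
proof
  fix P
  assume P: "P \<in> hdvd_forms h \<inter> p_central_forms p"
  have "monom (coeff P n) n \<in> central_subalg p h" for n
  proof (cases "p dvd n")
    case True
    then obtain q where n: "n = p * q"
      by blast
    obtain g where g: "coeff P n = h ^ n * g"
      using P by (auto simp: hdvd_forms_def elim: dvdE)
    have "h ^ n * pderiv g = pderiv (h ^ n * g)"
      using assms(1) True by (simp add: pderiv_mult pderiv_power_eq_0_if_CHAR_dvd)
    also have "\<dots> = 0"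
      using P unfolding g[symmetric] by (simp add: p_central_forms_def)
    finally have "pderiv g = 0"
      using assms(3) by simp
    have "monom (coeff P n) n = weyl_mult [:g:] (monom (h ^ (p * q)) (p * q))"
      unfolding g by (simp add: n weyl_mult_const_left smult_monom mult.commute)
    also have "\<dots> \<in> central_subalg p h"
      using weyl_const_in_central_subalg[OF assms(1) \<open>pderiv g = 0\<close>]
        monom_hpow_mult_in_central_subalg[OF assms(1,2)]
      unfolding central_subalg_def by (rule weyl_subalg.mult)
    finally show ?thesis .
  next
    case False
    then show ?thesis
      using P weyl_subalg_0 by (simp add: p_central_forms_def central_subalg_def)
  qed
  then have "(\<Sum>n\<le>degree P. monom (coeff P n) n) \<in> central_subalg p h"
    unfolding central_subalg_def by (rule weyl_subalg_sum[folded central_subalg_def])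
  then show "P \<in> central_subalg p h"
    by (simp add: poly_as_sum_of_monoms)
qed

section \<open>The basis\<close>

lemma eq_if_dvd_diff:
  fixes p m r i :: nat
  assumes "p dvd p * m + r - i" "i \<le> p * m + r" "i < p" "r < p"
  shows "i = r"
proof -
  have "r = (p * m + r) mod p"
    using assms(4) by simp
  also have "\<dots> = ((p * m + r - i) mod p + i) mod p"
    using assms(2) by (simp add: mod_add_left_eq)
  also have "\<dots> = i"
    using assms(1,3) by simp
  finally show ?thesis
    by simp
qed

lemma coeff_sum_mult_monom_residue:
  fixes c :: "nat \<Rightarrow> 'a::comm_ring_1 poly"
  assumes "\<And>i k. i < p \<Longrightarrow> \<not> p dvd k \<Longrightarrow> coeff (c i) k = 0" "r < p"
  shows "coeff (\<Sum>i<p. c i * monom (d i) i) (p * m + r) = coeff (c r) (p * m) * d r"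
proof -
  have "coeff (\<Sum>i<p. c i * monom (d i) i) (p * m + r) =
          (\<Sum>i<p. if p * m + r < i then 0 else d i * coeff (c i) (p * m + r - i))"
    by (simp add: coeff_sum mult.commute[of "c _"] coeff_monom_mult)
  also have "\<dots> = d r * coeff (c r) (p * m)"
  proof (subst sum_eq_single[where a = r])
    fix i
    assume "i \<in> {..<p}" "i \<noteq> r"
    then have "\<not> p dvd p * m + r - i" if "i \<le> p * m + r"
      using eq_if_dvd_diff[of p m r i] assms(2) that by auto
    then show "(if p * m + r < i then 0 else d i * coeff (c i) (p * m + r - i)) = 0"
      using assms(1) \<open>i \<in> {..<p}\<close> by simp
  qed (use assms in auto)
  finally show ?thesis
    by (simp add: mult.commute)
qed

text \<open>In characteristic p, F[x] is free over F[x^p] with basis 1, x, ..., x^(p-1); the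
  polynomials with vanishing derivative are exactly those of F[x^p].\<close>

lemma exists_decomp_pderiv_eq_0:
  fixes g :: "'a::field poly"
  assumes "CHAR('a) = p" "p > 0"
  shows "\<exists>u. (\<forall>i. pderiv (u i) = 0) \<and> g = (\<Sum>i<p. [:0, 1:] ^ i * u i)"
proof (induction g rule: pCons_induct)
  case (pCons a g)
  then obtain u where u: "\<forall>i. pderiv (u i) = 0" "g = (\<Sum>i<p. [:0, 1:] ^ i * u i)"
    by blast
  obtain p' where p: "p = Suc p'"
    using assms(2) by (cases p) auto
  define v where "v i = (if i = 0 then [:a:] + [:0, 1:] ^ p * u p' else u (i - 1))" for i
  have "pderiv ([:0, 1 :: 'a:] ^ p) = 0"
    using assms(1) by (simp add: pderiv_power_eq_0_if_CHAR_dvd)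
  then have "\<forall>i. pderiv (v i) = 0"
    using u(1) by (simp add: v_def pderiv_add pderiv_mult pderiv_pCons)
  moreover have "pCons a g = (\<Sum>i<p. [:0, 1:] ^ i * v i)"
  proof -
    have "(\<Sum>i<p. [:0, 1:] ^ i * v i) = v 0 + (\<Sum>i<p'. [:0, 1:] ^ Suc i * v (Suc i))"
      unfolding p by (simp only: sum.lessThan_Suc_shift) simp
    also have "\<dots> = [:a:] + [:0, 1:] ^ p * u p' + (\<Sum>i<p'. [:0, 1:] ^ Suc i * u i)"
      by (simp add: v_def)
    also have "[:0, 1:] * g = (\<Sum>i<p'. [:0, 1:] ^ Suc i * u i) + [:0, 1:] ^ p * u p'"
      unfolding u(2) p
      by (simp only: sum_distrib_left sum.lessThan_Suc mult.assoc power_Suc distrib_left)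
    moreover have "pCons a g = [:a:] + [:0, 1:] * g"
      by simp
    ultimately show ?thesis
      by (simp add: algebra_simps)
  qed
  ultimately show ?case
    by blast
qed (rule exI[of _ "\<lambda>_. 0"], simp)

lemma decomp_pderiv_eq_0_unique:
  fixes u :: "nat \<Rightarrow> 'a::field poly"
  assumes "CHAR('a) = p" "\<And>i. i < p \<Longrightarrow> pderiv (u i) = 0"
    and "(\<Sum>i<p. [:0, 1:] ^ i * u i) = 0" "r < p"
  shows "u r = 0"
proof (rule poly_eqI)
  fix k
  show "coeff (u r) k = coeff 0 k"
  proof (cases "p dvd k")
    case True
    then obtain m where "k = p * m"
      by blast
    have "coeff (\<Sum>i<p. u i * monom 1 i) (p * m + r) = coeff (u r) (p * m) * 1"
      using assms by (intro coeff_sum_mult_monom_residue) (simp_all add: coeff_eq_0_if_pderiv_eq_0)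
    moreover have "(\<Sum>i<p. u i * monom 1 i) = 0"
      using assms(3) by (simp add: monom_altdef mult.commute)
    ultimately show ?thesis
      using \<open>k = p * m\<close> by simp
  next
    case False
    then show ?thesis
      using assms by (simp add: coeff_eq_0_if_pderiv_eq_0)
  qed
qed

definition central_span :: "nat \<Rightarrow> 'a::field poly \<Rightarrow> 'a poly poly set" where
  "central_span p h =
     {\<Sum>i<p. \<Sum>j<p. z i j * monom ([:0, 1:] ^ i * h ^ j) j | z.
        \<forall>i<p. \<forall>j<p. z i j \<in> hdvd_forms h \<inter> p_central_forms p}"

lemma central_span_intro:
  "\<forall>i<p. \<forall>j<p. z i j \<in> hdvd_forms h \<inter> p_central_forms p \<Longrightarrow>
     (\<Sum>i<p. \<Sum>j<p. z i j * monom ([:0, 1:] ^ i * h ^ j) j) \<in> central_span p h"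
  unfolding central_span_def by blast

lemma central_span_0: "0 \<in> central_span p h"
  using central_span_intro[of p "\<lambda>_ _. 0" h] by (simp add: hdvd_forms_def p_central_forms_def)

lemma central_span_add:
  assumes "a \<in> central_span p h" "b \<in> central_span p h"
  shows "a + b \<in> central_span p h"
proof -
  obtain z w where
    z: "\<forall>i<p. \<forall>j<p. z i j \<in> hdvd_forms h \<inter> p_central_forms p"
       "a = (\<Sum>i<p. \<Sum>j<p. z i j * monom ([:0, 1:] ^ i * h ^ j) j)" and
    w: "\<forall>i<p. \<forall>j<p. w i j \<in> hdvd_forms h \<inter> p_central_forms p"
       "b = (\<Sum>i<p. \<Sum>j<p. w i j * monom ([:0, 1:] ^ i * h ^ j) j)"
    using assms unfolding central_span_def by blast
  have "a + b = (\<Sum>i<p. \<Sum>j<p. (z i j + w i j) * monom ([:0, 1:] ^ i * h ^ j) j)"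
    unfolding z(2) w(2) by (simp add: distrib_right sum.distrib)
  moreover have "\<forall>i<p. \<forall>j<p. z i j + w i j \<in> hdvd_forms h \<inter> p_central_forms p"
    using z(1) w(1) by (simp add: hdvd_forms_add p_central_forms_add)
  ultimately show ?thesis
    by (simp add: central_span_intro)
qed

lemma central_span_sum:
  "(\<And>x. x \<in> A \<Longrightarrow> f x \<in> central_span p h) \<Longrightarrow> (\<Sum>x\<in>A. f x) \<in> central_span p h"
  by (induction A rule: infinite_finite_induct) (simp_all add: central_span_0 central_span_add)

text \<open>Write n = p q + r and c = h^n (\<Sum>i<p. x^i u_i) with u_i \<in> F[x^p]; then
  c y^n = \<Sum>i<p. (u_i h^(p q) y^(p q)) (x^i h^r y^r).\<close>

lemma monom_in_central_span:
  fixes h :: "'a::field poly"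
  assumes "CHAR('a) = p" "p > 0" "h ^ n dvd c"
  shows "monom c n \<in> central_span p h"
proof -
  obtain g where g: "c = h ^ n * g"
    using assms(3) by blast
  obtain u where u: "\<forall>i. pderiv (u i) = 0" "g = (\<Sum>i<p. [:0, 1:] ^ i * u i)"
    using exists_decomp_pderiv_eq_0[OF assms(1,2)] by blast
  define q r where "q = n div p" and "r = n mod p"
  have n: "n = p * q + r" and "r < p"
    using assms(2) by (simp_all add: q_def r_def)
  define z where "z i j = (if j = r then monom (u i * h ^ (p * q)) (p * q) else 0)" for i j
  have "\<forall>i<p. \<forall>j<p. z i j \<in> hdvd_forms h \<inter> p_central_forms p"
    using assms(1) u(1)
    by (auto simp: z_def monom_in_hdvd_forms_iff hdvd_forms_def p_central_forms_def coeff_monom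
        pderiv_mult pderiv_power_eq_0_if_CHAR_dvd)
  moreover have "monom c n = (\<Sum>i<p. \<Sum>j<p. z i j * monom ([:0, 1:] ^ i * h ^ j) j)"
  proof -
    have "(\<Sum>i<p. \<Sum>j<p. z i j * monom ([:0, 1:] ^ i * h ^ j) j) =
            (\<Sum>i<p. z i r * monom ([:0, 1:] ^ i * h ^ r) r)"
      using \<open>r < p\<close> by (intro sum.cong refl sum_eq_single) (auto simp: z_def)
    also have "\<dots> = (\<Sum>i<p. monom (([:0, 1:] ^ i * u i) * h ^ n) n)"
      by (simp add: z_def mult_monom n power_add algebra_simps)
    also have "\<dots> = monom c n"
      by (simp add: g u(2) sum_distrib_left sum_distrib_right mult.commute flip: monom_sum)
    finally show ?thesis ..
  qed
  ultimately show ?thesis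
    by (simp add: central_span_intro)
qed

lemma hdvd_forms_subset_central_span:
  fixes h :: "'a::field poly"
  assumes "CHAR('a) = p" "p > 0"
  shows "hdvd_forms h \<subseteq> central_span p h"
proof
  fix a
  assume "a \<in> hdvd_forms h"
  then have "(\<Sum>n\<le>degree a. monom (coeff a n) n) \<in> central_span p h"
    using assms by (intro central_span_sum monom_in_central_span) (simp_all add: hdvd_forms_def)
  then show "a \<in> central_span p h"
    by (simp add: poly_as_sum_of_monoms)
qed

text \<open>Comparing coefficients of y^(p m + r) separates the index j = r; the remaining relation
  \<Sum>i<p. x^i u_i = 0 with u_i \<in> F[x^p] separates i.\<close>

lemma central_span_independent:
  fixes h :: "'a::field poly"
  assumes "CHAR('a) = p" "h \<noteq> 0"
    and "\<forall>i<p. \<forall>j<p. z i j \<in> p_central_forms p"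
    and "(\<Sum>i<p. \<Sum>j<p. z i j * monom ([:0, 1:] ^ i * h ^ j) j) = 0"
  shows "\<forall>i<p. \<forall>j<p. z i j = 0"
proof (intro allI impI)
  fix i0 r
  assume "i0 < p" "r < p"
  define Z where "Z j = (\<Sum>i<p. smult ([:0, 1:] ^ i) (z i j))" for j
  have "(\<Sum>j<p. Z j * monom (h ^ j) j) = (\<Sum>i<p. \<Sum>j<p. z i j * monom ([:0, 1:] ^ i * h ^ j) j)"
    unfolding Z_def
    by (subst sum.swap) (simp add: sum_distrib_right mult_smult_left smult_monom[symmetric]
        mult_smult_right)
  then have Z_0: "(\<Sum>j<p. Z j * monom (h ^ j) j) = 0"
    using assms(4) by simp
  have z_coeff: "coeff (z i j) k = 0" if "i < p" "j < p" "\<not> p dvd k" for i j k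
    using assms(3) that by (simp add: p_central_forms_def)
  have "coeff (z i0 r) (p * m) = 0" for m
  proof -
    have "coeff (Z r) (p * m) * h ^ r = 0"
      using Z_0 coeff_sum_mult_monom_residue[of p Z r "\<lambda>j. h ^ j" m] \<open>r < p\<close>
      by (simp add: Z_def coeff_sum z_coeff)
    then have "(\<Sum>i<p. [:0, 1:] ^ i * coeff (z i r) (p * m)) = 0"
      using assms(2) by (simp add: Z_def coeff_sum)
    moreover have "pderiv (coeff (z i r) (p * m)) = 0" if "i < p" for i
      using assms(3) that \<open>r < p\<close> by (simp add: p_central_forms_def)
    ultimately show ?thesis
      using decomp_pderiv_eq_0_unique[OF assms(1), where u = "\<lambda>i. coeff (z i r) (p * m)"]
        \<open>i0 < p\<close> by blast
  qed
  then show "z i0 r = 0"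
    using z_coeff \<open>i0 < p\<close> \<open>r < p\<close> by (metis mult.commute poly_eqI coeff_0 dvdE)
qed

lemma sum_weyl_mult_p_central_forms:
  fixes z :: "nat \<Rightarrow> nat \<Rightarrow> 'a::field poly poly"
  assumes "CHAR('a) = p" "p > 0" "\<forall>i<p. \<forall>j<p. z i j \<in> p_central_forms p"
  shows "(\<Sum>i<p. \<Sum>j<p. weyl_mult (z i j) (B i j)) = (\<Sum>i<p. \<Sum>j<p. z i j * B i j)"
  using assms weyl_mult_p_central_forms(1)[OF assms(1,2)] by simp

lemma A_h_spanned_over_centre:
  fixes h :: "'a::field poly"
  assumes "CHAR('a) = p" "p > 0" "a \<in> A_h h"
  shows "\<exists>z. (\<forall>i<p. \<forall>j<p. z i j \<in> hdvd_forms h \<inter> p_central_forms p) \<and>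
             a = (\<Sum>i<p. \<Sum>j<p. weyl_mult (z i j) (monom ([:0, 1:] ^ i * h ^ j) j))"
proof -
  obtain z where z: "\<forall>i<p. \<forall>j<p. z i j \<in> hdvd_forms h \<inter> p_central_forms p"
    and "a = (\<Sum>i<p. \<Sum>j<p. z i j * monom ([:0, 1:] ^ i * h ^ j) j)"
    using assms hdvd_forms_subset_central_span[OF assms(1,2)]
    by (auto simp: A_h_eq_hdvd_forms central_span_def)
  then show ?thesis
    using sum_weyl_mult_p_central_forms[OF assms(1,2)] by (intro exI[of _ z]) auto
qed

lemma A_h_independent_over_centre:
  fixes h :: "'a::field poly"
  assumes "CHAR('a) = p" "p > 0" "h \<noteq> 0"
    and "\<forall>i<p. \<forall>j<p. z i j \<in> p_central_forms p"
    and "(\<Sum>i<p. \<Sum>j<p. weyl_mult (z i j) (monom ([:0, 1:] ^ i * h ^ j) j)) = 0"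
  shows "\<forall>i<p. \<forall>j<p. z i j = 0"
  using assms central_span_independent[OF assms(1,3,4)]
  by (simp add: sum_weyl_mult_p_central_forms)

theorem proposition5p5:
  fixes h :: "'a::field poly" and p :: nat
  assumes "CHAR('a) = p" and "p > 0" and "h \<noteq> 0"
  defines "b \<equiv> (\<lambda>i j. weyl_mult (weyl_mult (weyl_pow weyl_x i) (weyl_const (h ^ j)))
                                 (weyl_pow weyl_y j))"
  shows "weyl_center (A_h h) =
           weyl_subalg {weyl_pow weyl_x p,
                        weyl_mult (weyl_const (h ^ p)) (weyl_pow weyl_y p)} \<and>
         (\<forall>i<p. \<forall>j<p. b i j \<in> A_h h) \<and>
         (\<forall>a\<in>A_h h. \<exists>z. (\<forall>i<p. \<forall>j<p. z i j \<in> weyl_center (A_h h)) \<and>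
                      a = (\<Sum>i<p. \<Sum>j<p. weyl_mult (z i j) (b i j))) \<and>
         (\<forall>z. (\<forall>i<p. \<forall>j<p. z i j \<in> weyl_center (A_h h)) \<longrightarrow>
             (\<Sum>i<p. \<Sum>j<p. weyl_mult (z i j) (b i j)) = 0 \<longrightarrow>
             (\<forall>i<p. \<forall>j<p. z i j = 0))"
proof -
  have centre: "weyl_center (A_h h) = hdvd_forms h \<inter> p_central_forms p"
    using assms(1-3) by (rule weyl_center_A_h)
  have generators: "weyl_subalg {weyl_pow weyl_x p,
                       weyl_mult (weyl_const (h ^ p)) (weyl_pow weyl_y p)} =
                      hdvd_forms h \<inter> p_central_forms p"
    unfolding central_subalg_eq
    using central_subalg_subset[OF assms(1,2)] hdvd_p_central_forms_subset_central_subalg[OF assms(1-3)]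
    by blast
  have basis: "b i j = monom ([:0, 1:] ^ i * h ^ j) j" for i j
    by (simp add: b_def weyl_x_def weyl_pow_const weyl_const_def weyl_mult_const_left weyl_pow_y
        smult_monom)
  show ?thesis
    unfolding centre generators basis
    using A_h_spanned_over_centre[OF assms(1,2)] A_h_independent_over_centre[OF assms(1-3)]
    by (simp add: A_h_eq_hdvd_forms monom_in_hdvd_forms_iff)
qed

end
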